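(* Let $s$ be a program with semantics $[\![s]\!]\subseteq\Sigma\times\Sigma$, $Q$ a predicate on $\Sigma$, and $\mathcal{L}$ a language of predicates on $\Sigma$, and let $\overline{\mathcal{L}}=\{\neg\varphi\mid\varphi\in\mathcal{L}\}$. Then the $\mathcal{L}$-weakest liberal precondition $\mathit{wlp}_{\mathcal{L}}(s,Q)$ is semantically equivalent to the negation of any best $\overline{\mathcal{L}}$-conjunction of the query $\Psi(\sigma):=\exists\sigma'.\,\neg Q(\sigma')\wedge[\![s]\!](\sigma,\sigma')$ (whose free variable is $\sigma$ and hidden variable is $\sigma'$).
   Context: $\Sigma$ is a set of program states; $[\![s]\!](\sigma,\sigma')$ holds iff $s$ started in $\sigma$ can terminate in $\sigma'$. The Hoare triple $\{P\}s\{Q\}$ holds iff $\forall\sigma,\sigma'.\,P(\sigma)\wedge[\![s]\!](\sigma,\sigma')\Rightarrow Q(\sigma')$. For predicates, $[\![\varphi]\!]$ is its set of models. $\mathit{wlp}_{\mathcal{L}}(s,Q)$ is the (possibly infinite) disjunction $\bigvee_i P_i$ of all $P_i\in\mathcal{L}$ such that (i) $\{P_i\}s\{Q\}$ holds and (ii) there is no $P\in\mathcal{L}$ with $[\![P_i]\!]\subset[\![P]\!]$ and $\{P\}s\{Q\}$. For a query $\Psi(v)=\exists h.\,\psi(v,h)$ and a language $\mathcal{L}'$: $\varphi\in\mathcal{L}'$ is an $\mathcal{L}'$-consequence if $\forall v.\,\Psi(v)\Rightarrow\varphi(v)$, and a strongest one if no $\mathcal{L}'$-consequence $\varphi'$ has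 $[\![\varphi']\!]\subset[\![\varphi]\!]$. A set $\Pi\subseteq\mathcal{L}'$ forms a best $\mathcal{L}'$-conjunction $\bigwedge\Pi$ iff each element is a strongest $\mathcal{L}'$-consequence, distinct elements are incomparable (neither model set contains the other), and $[\![\bigwedge\Pi]\!]\subseteq[\![\varphi]\!]$ for every strongest $\mathcal{L}'$-consequence $\varphi$. *)

theory Defs
  imports Main
begin

definition models :: "('v \<Rightarrow> bool) \<Rightarrow> 'v set" where
  "models P = {v. P v}"

definition hoare :: "('s \<Rightarrow> bool) \<Rightarrow> ('s \<Rightarrow> 's \<Rightarrow> bool) \<Rightarrow> ('s \<Rightarrow> bool) \<Rightarrow> bool" where
  "hoare P sem Q \<longleftrightarrow> (\<forall>\<sigma> \<sigma>'. P \<sigma> \<and> sem \<sigma> \<sigma>' \<longrightarrow> Q \<sigma>')"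

definition wlp_L :: "('s \<Rightarrow> bool) set \<Rightarrow> ('s \<Rightarrow> 's \<Rightarrow> bool) \<Rightarrow> ('s \<Rightarrow> bool) \<Rightarrow> ('s \<Rightarrow> bool)" where
  "wlp_L L sem Q = (\<lambda>\<sigma>. \<exists>Pi\<in>L. hoare Pi sem Q
      \<and> \<not> (\<exists>P\<in>L. models Pi \<subset> models P \<and> hoare P sem Q) \<and> Pi \<sigma>)"

definition neg_lang :: "('v \<Rightarrow> bool) set \<Rightarrow> ('v \<Rightarrow> bool) set" where
  "neg_lang L = (\<lambda>\<phi>. \<lambda>v. \<not> \<phi> v) ` L"

definition consequence :: "('v \<Rightarrow> bool) set \<Rightarrow> ('v \<Rightarrow> bool) \<Rightarrow> ('v \<Rightarrow> bool) \<Rightarrow> bool" where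
  "consequence L' \<Psi> \<phi> \<longleftrightarrow> \<phi> \<in> L' \<and> (\<forall>v. \<Psi> v \<longrightarrow> \<phi> v)"

definition strongest_consequence :: "('v \<Rightarrow> bool) set \<Rightarrow> ('v \<Rightarrow> bool) \<Rightarrow> ('v \<Rightarrow> bool) \<Rightarrow> bool" where
  "strongest_consequence L' \<Psi> \<phi> \<longleftrightarrow> consequence L' \<Psi> \<phi>
     \<and> \<not> (\<exists>\<phi>'. consequence L' \<Psi> \<phi>' \<and> models \<phi>' \<subset> models \<phi>)"

definition conj_set :: "('v \<Rightarrow> bool) set \<Rightarrow> ('v \<Rightarrow> bool)" where
  "conj_set \<Pi> = (\<lambda>v. \<forall>\<phi>\<in>\<Pi>. \<phi> v)"

definition best_conjunction :: "('v \<Rightarrow> bool) set \<Rightarrow> ('v \<Rightarrow> bool) \<Rightarrow> ('v \<Rightarrow> bool) set \<Rightarrow> bool" where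
  "best_conjunction L' \<Psi> \<Pi> \<longleftrightarrow> \<Pi> \<subseteq> L'
     \<and> (\<forall>\<phi>\<in>\<Pi>. strongest_consequence L' \<Psi> \<phi>)
     \<and> (\<forall>\<phi>1\<in>\<Pi>. \<forall>\<phi>2\<in>\<Pi>. \<phi>1 \<noteq> \<phi>2 \<longrightarrow>
          \<not> models \<phi>1 \<subseteq> models \<phi>2 \<and> \<not> models \<phi>2 \<subseteq> models \<phi>1)
     \<and> (\<forall>\<phi>. strongest_consequence L' \<Psi> \<phi> \<longrightarrow> models (conj_set \<Pi>) \<subseteq> models \<phi>)"

definition wlp_query :: "('s \<Rightarrow> 's \<Rightarrow> bool) \<Rightarrow> ('s \<Rightarrow> bool) \<Rightarrow> ('s \<Rightarrow> bool)" where
  "wlp_query sem Q = (\<lambda>\<sigma>. \<exists>\<sigma>'. \<not> Q \<sigma>' \<and> sem \<sigma> \<sigma>')"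

end

theory Submission
  imports Defs
begin

text \<open>A triple \<open>{P} s {Q}\<close> holds iff \<open>\<not>P\<close> is implied by the query \<open>\<Psi>\<close>, and negation reverses
  inclusion of model sets; hence the maximal valid preconditions in \<open>L\<close> are exactly the negations
  of the strongest \<open>\<not>L\<close>-consequences of \<open>\<Psi>\<close>. A best conjunction is equivalent to the conjunction
  of all strongest consequences, so its negation is the disjunction of all maximal valid
  preconditions, which is \<open>wlp\<^sub>L(s, Q)\<close>.\<close>

definition maximal_valid_pre ::
  "('s \<Rightarrow> bool) set \<Rightarrow> ('s \<Rightarrow> 's \<Rightarrow> bool) \<Rightarrow> ('s \<Rightarrow> bool) \<Rightarrow> ('s \<Rightarrow> bool) \<Rightarrow> bool" where
  "maximal_valid_pre L sem Q P \<longleftrightarrow> P \<in> L \<and> hoare P sem Q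
     \<and> \<not> (\<exists>P'\<in>L. models P \<subset> models P' \<and> hoare P' sem Q)"

lemma wlp_L_iff_maximal_valid_pre:
  "wlp_L L sem Q \<sigma> \<longleftrightarrow> (\<exists>P. maximal_valid_pre L sem Q P \<and> P \<sigma>)"
  unfolding wlp_L_def maximal_valid_pre_def by blast

lemma hoare_iff_disjoint_wlp_query:
  "hoare P sem Q \<longleftrightarrow> (\<forall>\<sigma>. wlp_query sem Q \<sigma> \<longrightarrow> \<not> P \<sigma>)"
  unfolding hoare_def wlp_query_def by blast

lemma models_neg_psubset_iff:
  "models (\<lambda>v. \<not> A v) \<subset> models (\<lambda>v. \<not> B v) \<longleftrightarrow> models B \<subset> models A"
  unfolding models_def by blast

lemma consequence_neg_lang_iff:
  "consequence (neg_lang L) \<Psi> \<phi> \<longleftrightarrow> (\<exists>P\<in>L. \<phi> = (\<lambda>v. \<not> P v) \<and> (\<forall>v. \<Psi> v \<longrightarrow> \<not> P v))"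
  unfolding consequence_def neg_lang_def by blast

lemma strongest_consequence_neg_lang_iff:
  "strongest_consequence (neg_lang L) \<Psi> \<phi> \<longleftrightarrow>
     (\<exists>P\<in>L. \<phi> = (\<lambda>v. \<not> P v) \<and> (\<forall>v. \<Psi> v \<longrightarrow> \<not> P v)
        \<and> \<not> (\<exists>P'\<in>L. models P \<subset> models P' \<and> (\<forall>v. \<Psi> v \<longrightarrow> \<not> P' v)))"
  (is "?strongest \<longleftrightarrow> (\<exists>P\<in>L. ?neg P \<and> ?disjoint P \<and> \<not> ?weaker P)")
proof -
  have weaker_iff: "(\<exists>\<phi>'. consequence (neg_lang L) \<Psi> \<phi>' \<and> models \<phi>' \<subset> models (\<lambda>v. \<not> P v))
      \<longleftrightarrow> ?weaker P" for P
  proof -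
    have "(\<exists>\<phi>'. consequence (neg_lang L) \<Psi> \<phi>' \<and> models \<phi>' \<subset> models (\<lambda>v. \<not> P v))
        \<longleftrightarrow> (\<exists>P'\<in>L. models (\<lambda>v. \<not> P' v) \<subset> models (\<lambda>v. \<not> P v) \<and> (\<forall>v. \<Psi> v \<longrightarrow> \<not> P' v))"
      unfolding consequence_neg_lang_iff by blast
    then show ?thesis
      unfolding models_neg_psubset_iff .
  qed
  show ?thesis
  proof
    assume ?strongest
    then obtain P where "P \<in> L" "?neg P" "?disjoint P"
        "\<not> (\<exists>\<phi>'. consequence (neg_lang L) \<Psi> \<phi>' \<and> models \<phi>' \<subset> models (\<lambda>v. \<not> P v))"
      unfolding strongest_consequence_def consequence_neg_lang_iff by blast
    then show "\<exists>P\<in>L. ?neg P \<and> ?disjoint P \<and> \<not> ?weaker P"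
      unfolding weaker_iff by blast
  next
    assume "\<exists>P\<in>L. ?neg P \<and> ?disjoint P \<and> \<not> ?weaker P"
    then obtain P where "P \<in> L" "?neg P" "?disjoint P" "\<not> ?weaker P" by blast
    then show ?strongest
      unfolding strongest_consequence_def consequence_neg_lang_iff weaker_iff [symmetric] by blast
  qed
qed

lemma strongest_consequence_wlp_query_iff:
  "strongest_consequence (neg_lang L) (wlp_query sem Q) \<phi> \<longleftrightarrow>
     (\<exists>P. maximal_valid_pre L sem Q P \<and> \<phi> = (\<lambda>v. \<not> P v))"
  unfolding strongest_consequence_neg_lang_iff maximal_valid_pre_def hoare_iff_disjoint_wlp_query
  by blast

lemma best_conjunction_iff_all_strongest:
  assumes "best_conjunction L' \<Psi> \<Pi>"
  shows "conj_set \<Pi> v \<longleftrightarrow> (\<forall>\<phi>. strongest_consequence L' \<Psi> \<phi> \<longrightarrow> \<phi> v)"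
  using assms unfolding best_conjunction_def conj_set_def models_def by blast

theorem mainTheorem4:
  fixes sem :: "'s \<Rightarrow> 's \<Rightarrow> bool" and Q :: "'s \<Rightarrow> bool"
    and L :: "('s \<Rightarrow> bool) set" and \<Pi> :: "('s \<Rightarrow> bool) set"
  assumes "best_conjunction (neg_lang L) (wlp_query sem Q) \<Pi>"
  shows "\<forall>\<sigma>. wlp_L L sem Q \<sigma> \<longleftrightarrow> \<not> conj_set \<Pi> \<sigma>"
proof
  fix \<sigma>
  have "\<not> conj_set \<Pi> \<sigma> \<longleftrightarrow>
      (\<exists>\<phi>. strongest_consequence (neg_lang L) (wlp_query sem Q) \<phi> \<and> \<not> \<phi> \<sigma>)"
    using best_conjunction_iff_all_strongest [OF assms] by blast
  also have "\<dots> \<longleftrightarrow> wlp_L L sem Q \<sigma>"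
    unfolding strongest_consequence_wlp_query_iff wlp_L_iff_maximal_valid_pre by auto
  finally show "wlp_L L sem Q \<sigma> \<longleftrightarrow> \<not> conj_set \<Pi> \<sigma>" ..
qed

end
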